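(* Let $W_2\in\{M_2,S_2\}$ and let $\phi:W_2\to W_2$ be a linear map with $\sigma_{\mathcal{K}}(\phi(A))=\sigma_{\mathcal{K}}(A)$ for all $A\in W_2$. If $A\in W_2$ has two distinct strict boundary L-eigenvalues, then $$\sigma_{\mathcal{K}}^{int}(A)=\sigma_{\mathcal{K}}^{int}(\phi(A))\neq\emptyset\quad\text{and}\quad \sigma_{\mathcal{K}}^{bd}(A)=\sigma_{\mathcal{K}}^{bd}(\phi(A)).$$
   Context: $M_2$: real $2\times2$ matrices; $S_2$: symmetric ones. Lorentz cone $\mathcal{K}=\{(x_1,x_2)^T:|x_1|\le x_2\}$. A real $\lambda$ is an L-eigenvalue of $A$ if there is a nonzero $x\in\mathcal{K}$ with $(A-\lambda I)x\in\mathcal{K}$ and $x^T(A-\lambda I)x=0$; $\sigma_{\mathcal{K}}(A)$ is the set of L-eigenvalues; $\sigma^{int}_{\mathcal{K}}(A)$ (resp. $\sigma^{bd}_{\mathcal{K}}(A)$) consists of those with such an $x$ in the interior (resp. on the boundary) of $\mathcal{K}$. For $A=\begin{bmatrix}a&b\\c&d\end{bmatrix}$, a boundary L-eigenvalue $\lambda$ is of type $+$ if $\lambda=\frac{a+d+b+c}{2}$ and $a-d\le c-b$, of type $-$ if $\lambda=\frac{a+d-b-c}{2}$ and $a-d\le b-c$; it is strict if it is of type $+$ with $a-d<c-b$ or of type $-$ with $a-d<b-c$ (if of both types, strict when at least one of these strict inequalities holds). *)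

theory Defs
  imports "HOL-Analysis.Analysis"
begin

text \<open>Real 2x2 matrices are "real^2^2"; entry (i,j) is A$i$j; a=A$1$1, b=A$1$2, c=A$2$1, d=A$2$2.\<close>

definition lorentz_cone :: "(real^2) set" where
  "lorentz_cone = {x. \<bar>x$1\<bar> \<le> x$2}"

definition sym_mats :: "(real^2^2) set" where
  "sym_mats = {A. transpose A = A}"

definition L_eig_vec :: "real^2^2 \<Rightarrow> real \<Rightarrow> real^2 \<Rightarrow> bool" where
  "L_eig_vec A lam x \<longleftrightarrow> x \<noteq> 0 \<and> x \<in> lorentz_cone \<and>
     (A - lam *\<^sub>R mat 1) *v x \<in> lorentz_cone \<and> x \<bullet> ((A - lam *\<^sub>R mat 1) *v x) = 0"

definition L_spec :: "real^2^2 \<Rightarrow> real set" where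
  "L_spec A = {lam. \<exists>x. L_eig_vec A lam x}"

definition L_spec_int :: "real^2^2 \<Rightarrow> real set" where
  "L_spec_int A = {lam. \<exists>x. L_eig_vec A lam x \<and> x \<in> interior lorentz_cone}"

definition L_spec_bd :: "real^2^2 \<Rightarrow> real set" where
  "L_spec_bd A = {lam. \<exists>x. L_eig_vec A lam x \<and> x \<in> frontier lorentz_cone}"

definition strict_bd_L_eig :: "real^2^2 \<Rightarrow> real \<Rightarrow> bool" where
  "strict_bd_L_eig A lam \<longleftrightarrow> lam \<in> L_spec_bd A \<and>
     ((lam = (A$1$1 + A$2$2 + A$1$2 + A$2$1) / 2 \<and> A$1$1 - A$2$2 < A$2$1 - A$1$2) \<or>
      (lam = (A$1$1 + A$2$2 - A$1$2 - A$2$1) / 2 \<and> A$1$1 - A$2$2 < A$1$2 - A$2$1))"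

end

theory Submission
  imports Defs "HOL-Computational_Algebra.Polynomial"
begin

text \<open>
  If both type conditions of a matrix A are strict, its boundary L-eigenvalues are the two type
  values and it has exactly one interior L-eigenvalue: interior eigenvectors (r, 1), |r| < 1,
  correspond to roots in (-1, 1) of c r^2 + (d - a) r - b, which changes sign on [-1, 1] and
  cannot have two roots there. A linear L-spectrum preserver phi is injective, hence bijective on W.

  If l is a boundary L-eigenvalue of A, then for small t > 0
  the boundary L-eigenvalue l + t b of A + t B is an L-eigenvalue of phi A + t phi B. Unless it is
  a boundary one there, det (phi A + t phi B - (l + t b) I) vanishes for all small t, hence
  identically in t; choosing phi B as a rotation (for M_2) or as [0 1; 1 0] resp. diag (1, -1)
  (for S_2) rules this out. So phi A is again strict, with the same boundary L-eigenvalues.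
  Finally, a symmetric rank-one B that kills the interior eigenvector of A keeps the interior
  L-eigenvalue of A + t B fixed while a boundary one moves. If the interior L-eigenvalues of A
  and phi A differed, both values would have to be boundary L-eigenvalues of phi A + t phi B,
  which is impossible for a two-element boundary spectrum moving affinely in t.
\<close>

abbreviation mat2 :: "real \<Rightarrow> real \<Rightarrow> real \<Rightarrow> real \<Rightarrow> real^2^2" where
  "mat2 a b c d \<equiv> vector [vector [a, b], vector [c, d]]"

lemma matrix_vector_mult_2 [simp]: "((X::real^2^2) *v x)$i = X$i$1 * x$1 + X$i$2 * x$2"
  by (simp add: matrix_vector_mult_def sum_2)

lemma inner_2: "(x::real^2) \<bullet> y = x$1 * y$1 + x$2 * y$2"
  by (simp add: inner_vec_def sum_2)

lemma vec_2_eq_iff: "(x::'a^2) = y \<longleftrightarrow> x$1 = y$1 \<and> x$2 = y$2"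
  by (simp add: vec_eq_iff forall_2)

lemma mat_2_components [simp]: "(mat k :: real^2^2)$1$1 = k" "(mat k :: real^2^2)$1$2 = 0"
  "(mat k :: real^2^2)$2$1 = 0" "(mat k :: real^2^2)$2$2 = k"
  by (simp_all add: mat_def)

lemma sym_mats_iff: "X \<in> sym_mats \<longleftrightarrow> X$1$2 = X$2$1"
  by (auto simp: sym_mats_def transpose_def vec_eq_iff forall_2)

lemma subspace_sym_mats: "subspace sym_mats"
  by (auto simp: subspace_def sym_mats_iff)

section \<open>The Lorentz cone\<close>

lemma lorentz_cone_halfspaces:
  "lorentz_cone = {x. vector [1, -1] \<bullet> x \<le> 0} \<inter> {x. vector [-1, -1] \<bullet> x \<le> (0::real)}"
  by (auto simp: lorentz_cone_def inner_2)

lemma closed_lorentz_cone: "closed lorentz_cone"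
  unfolding lorentz_cone_halfspaces by (intro closed_Int closed_halfspace_le)

lemma interior_lorentz_cone: "interior lorentz_cone = {x. \<bar>x$1\<bar> < x$2}"
  unfolding lorentz_cone_halfspaces interior_Int
  by (subst (1 2) interior_halfspace_le) (auto simp: vec_2_eq_iff inner_2)

lemma frontier_lorentz_cone: "frontier lorentz_cone = {x. \<bar>x$1\<bar> = x$2}"
  unfolding frontier_def closure_closed[OF closed_lorentz_cone] interior_lorentz_cone
  by (auto simp: lorentz_cone_def)

lemma lorentz_cone_interior_frontier:
  "lorentz_cone = interior lorentz_cone \<union> frontier lorentz_cone"
  using closed_lorentz_cone interior_subset by (auto simp: frontier_def closure_closed)

lemma frontier_lorentz_cone_rays:
  assumes "x \<in> frontier lorentz_cone" "x \<noteq> 0"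
  shows "0 < x$2" "x = x$2 *\<^sub>R vector [1, 1] \<or> x = x$2 *\<^sub>R vector [-1, 1]"
proof -
  have x: "\<bar>x$1\<bar> = x$2" "x$1 \<noteq> 0 \<or> x$2 \<noteq> 0"
    using assms by (auto simp: frontier_lorentz_cone vec_2_eq_iff)
  then show "0 < x$2"
    by linarith
  show "x = x$2 *\<^sub>R vector [1, 1] \<or> x = x$2 *\<^sub>R vector [-1, 1]"
    using x(1) by (cases "0 \<le> x$1") (simp_all add: vec_2_eq_iff)
qed

lemma lorentz_cone_orthogonal_interior:
  assumes "x \<in> interior lorentz_cone" "y \<in> lorentz_cone" "x \<bullet> y = 0"
  shows "y = 0"
proof -
  have x: "\<bar>x$1\<bar> < x$2" and y: "\<bar>y$1\<bar> \<le> y$2" and xy: "x$1 * y$1 + x$2 * y$2 = 0"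
    using assms unfolding interior_lorentz_cone by (auto simp: lorentz_cone_def inner_2)
  have "- (x$1 * y$1) \<le> \<bar>x$1\<bar> * \<bar>y$1\<bar>"
    using abs_ge_minus_self by (metis abs_mult)
  also have "\<dots> \<le> \<bar>x$1\<bar> * y$2"
    using y by (simp add: mult_left_mono)
  finally have "(x$2 - \<bar>x$1\<bar>) * y$2 \<le> 0"
    using xy by (simp add: algebra_simps)
  moreover have "0 \<le> y$2"
    using y by linarith
  ultimately have "y$2 = 0"
    using x by (simp add: mult_le_0_iff)
  then show "y = 0"
    using y by (simp add: vec_2_eq_iff)
qed

lemma lorentz_cone_row_kernel:
  assumes "\<bar>p\<bar> < \<bar>q\<bar>" "x \<in> lorentz_cone" "p * x$1 + q * x$2 = 0"
  shows "x = 0"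
proof -
  have x: "\<bar>x$1\<bar> \<le> x$2"
    using assms(2) by (simp add: lorentz_cone_def)
  then have x2: "0 \<le> x$2"
    by linarith
  have "\<bar>q\<bar> * x$2 = \<bar>q * x$2\<bar>"
    using x2 by (simp add: abs_mult)
  also have "\<dots> = \<bar>- (p * x$1)\<bar>"
    using assms(3) by (simp add: eq_neg_iff_add_eq_0)
  also have "\<dots> = \<bar>p * x$1\<bar>"
    by (rule abs_minus_cancel)
  also have "\<dots> = \<bar>p\<bar> * \<bar>x$1\<bar>"
    by (rule abs_mult)
  also have "\<dots> \<le> \<bar>p\<bar> * x$2"
    using x by (simp add: mult_left_mono)
  finally have "(\<bar>q\<bar> - \<bar>p\<bar>) * x$2 \<le> 0"
    by (simp add: algebra_simps)
  then have "x$2 = 0"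
    using assms(1) x2 by (simp add: mult_le_0_iff)
  then show ?thesis
    using x by (simp add: vec_2_eq_iff)
qed

section \<open>Boundary and interior L-eigenvalues\<close>

text \<open>
  The boundary L-eigenvalue candidates of type + and - (eigenvectors (1, 1) and (-1, 1)), and
  the slacks in their type conditions a - d \<le> c - b and a - d \<le> b - c.
\<close>

definition lam_plus :: "real^2^2 \<Rightarrow> real" where
  "lam_plus X = (X$1$1 + X$2$2 + X$1$2 + X$2$1) / 2"

definition lam_minus :: "real^2^2 \<Rightarrow> real" where
  "lam_minus X = (X$1$1 + X$2$2 - X$1$2 - X$2$1) / 2"

definition slack_plus :: "real^2^2 \<Rightarrow> real" where
  "slack_plus X = (X$2$1 - X$1$2) - (X$1$1 - X$2$2)"

definition slack_minus :: "real^2^2 \<Rightarrow> real" where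
  "slack_minus X = (X$1$2 - X$2$1) - (X$1$1 - X$2$2)"

definition L_strict :: "real^2^2 \<Rightarrow> bool" where
  "L_strict X \<longleftrightarrow> 0 < slack_plus X \<and> 0 < slack_minus X"

lemma lam_slack_add_scaleR [simp]:
  "lam_plus (X + t *\<^sub>R Y) = lam_plus X + t * lam_plus Y"
  "lam_minus (X + t *\<^sub>R Y) = lam_minus X + t * lam_minus Y"
  "slack_plus (X + t *\<^sub>R Y) = slack_plus X + t * slack_plus Y"
  "slack_minus (X + t *\<^sub>R Y) = slack_minus X + t * slack_minus Y"
  by (simp_all add: lam_plus_def lam_minus_def slack_plus_def slack_minus_def algebra_simps
      add_divide_distrib diff_divide_distrib)

lemma L_eig_vec_scaleR:
  assumes "0 < s"
  shows "L_eig_vec X l (s *\<^sub>R x) \<longleftrightarrow> L_eig_vec X l x"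
proof -
  have cone: "s *\<^sub>R y \<in> lorentz_cone \<longleftrightarrow> y \<in> lorentz_cone" for y :: "real^2"
    using assms by (auto simp: lorentz_cone_def abs_mult)
  show ?thesis
    using assms cone by (simp add: L_eig_vec_def matrix_vector_mult_scaleR)
qed

lemma L_eig_vec_interior:
  assumes "x \<in> interior lorentz_cone"
  shows "L_eig_vec X l x \<longleftrightarrow> (X - l *\<^sub>R mat 1) *v x = 0"
proof -
  have "x \<noteq> 0"
    using assms by (auto simp: interior_lorentz_cone vec_2_eq_iff)
  moreover have "x \<in> lorentz_cone"
    using assms interior_subset by blast
  moreover have "0 \<in> lorentz_cone"
    by (simp add: lorentz_cone_def)
  ultimately show ?thesis
    using assms lorentz_cone_orthogonal_interior by (auto simp: L_eig_vec_def)
qed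

lemma L_spec_int_iff:
  "l \<in> L_spec_int X \<longleftrightarrow> (\<exists>r. \<bar>r\<bar> < 1 \<and> (X - l *\<^sub>R mat 1) *v vector [r, 1] = 0)"
proof
  assume "l \<in> L_spec_int X"
  then obtain x where x: "x \<in> interior lorentz_cone" "(X - l *\<^sub>R mat 1) *v x = 0"
    by (auto simp: L_spec_int_def L_eig_vec_interior)
  then have pos: "\<bar>x$1\<bar> < x$2"
    by (simp add: interior_lorentz_cone)
  then have "vector [x$1 / x$2, 1] = (1 / x$2) *\<^sub>R x"
    by (simp add: vec_2_eq_iff)
  then have "(X - l *\<^sub>R mat 1) *v vector [x$1 / x$2, 1] = 0"
    using x(2) by (simp add: matrix_vector_mult_scaleR)
  moreover have "\<bar>x$1 / x$2\<bar> < 1"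
    using pos by (simp add: abs_divide)
  ultimately show "\<exists>r. \<bar>r\<bar> < 1 \<and> (X - l *\<^sub>R mat 1) *v vector [r, 1] = 0"
    by blast
next
  assume "\<exists>r. \<bar>r\<bar> < 1 \<and> (X - l *\<^sub>R mat 1) *v vector [r, 1] = 0"
  then obtain r where "\<bar>r\<bar> < 1" "(X - l *\<^sub>R mat 1) *v vector [r, 1] = 0"
    by blast
  moreover from this have "vector [r, 1] \<in> interior lorentz_cone"
    by (simp add: interior_lorentz_cone)
  ultimately show "l \<in> L_spec_int X"
    unfolding L_spec_int_def using L_eig_vec_interior by blast
qed

lemma L_eig_vec_plus:
  "L_eig_vec X l (vector [1, 1]) \<longleftrightarrow> l = lam_plus X \<and> 0 \<le> slack_plus X"
proof -
  have "L_eig_vec X l (vector [1, 1]) \<longleftrightarrow>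
      \<bar>X$1$1 - l + X$1$2\<bar> \<le> X$2$1 + X$2$2 - l \<and> (X$1$1 - l + X$1$2) + (X$2$1 + X$2$2 - l) = 0"
    by (simp add: L_eig_vec_def lorentz_cone_def inner_2 vec_2_eq_iff algebra_simps)
  then show ?thesis
    by (auto simp: lam_plus_def slack_plus_def)
qed

lemma L_eig_vec_minus:
  "L_eig_vec X l (vector [-1, 1]) \<longleftrightarrow> l = lam_minus X \<and> 0 \<le> slack_minus X"
proof -
  have "L_eig_vec X l (vector [-1, 1]) \<longleftrightarrow>
      \<bar>X$1$2 - (X$1$1 - l)\<bar> \<le> X$2$2 - l - X$2$1 \<and> (X$1$1 - l - X$1$2) + (X$2$2 - l - X$2$1) = 0"
    by (simp add: L_eig_vec_def lorentz_cone_def inner_2 vec_2_eq_iff algebra_simps)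
  then show ?thesis
    by (auto simp: lam_minus_def slack_minus_def)
qed

lemma L_spec_bd_iff:
  "l \<in> L_spec_bd X \<longleftrightarrow>
     (l = lam_plus X \<and> 0 \<le> slack_plus X) \<or> (l = lam_minus X \<and> 0 \<le> slack_minus X)"
proof
  assume "l \<in> L_spec_bd X"
  then obtain x where x: "L_eig_vec X l x" "x \<in> frontier lorentz_cone"
    by (auto simp: L_spec_bd_def)
  then have "x \<noteq> 0"
    by (simp add: L_eig_vec_def)
  then have "L_eig_vec X l (vector [1, 1]) \<or> L_eig_vec X l (vector [-1, 1])"
    using frontier_lorentz_cone_rays[OF x(2)] x(1) L_eig_vec_scaleR by metis
  then show "(l = lam_plus X \<and> 0 \<le> slack_plus X) \<or> (l = lam_minus X \<and> 0 \<le> slack_minus X)"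
    by (simp add: L_eig_vec_plus L_eig_vec_minus)
next
  have "vector [1, 1] \<in> frontier lorentz_cone" "vector [-1, 1] \<in> frontier lorentz_cone"
    by (simp_all add: frontier_lorentz_cone)
  then show "(l = lam_plus X \<and> 0 \<le> slack_plus X) \<or> (l = lam_minus X \<and> 0 \<le> slack_minus X) \<Longrightarrow>
      l \<in> L_spec_bd X"
    unfolding L_spec_bd_def using L_eig_vec_plus L_eig_vec_minus by blast
qed

lemma frontier_kernel_L_spec_bd:
  assumes "x \<in> frontier lorentz_cone" "x \<noteq> 0" "(X - l *\<^sub>R mat 1) *v x = 0"
  shows "l \<in> L_spec_bd X"
proof -
  have "x \<in> lorentz_cone" "0 \<in> lorentz_cone"
    using assms(1) closed_lorentz_cone frontier_subset_closed by (auto simp: lorentz_cone_def)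
  then show ?thesis
    using assms unfolding L_spec_bd_def L_eig_vec_def by auto
qed

lemma L_spec_Un: "L_spec X = L_spec_int X \<union> L_spec_bd X"
  using lorentz_cone_interior_frontier
  by (auto simp: L_spec_def L_spec_int_def L_spec_bd_def L_eig_vec_def)

lemma strict_bd_L_eig_iff:
  "strict_bd_L_eig A l \<longleftrightarrow> (l = lam_plus A \<and> 0 < slack_plus A) \<or> (l = lam_minus A \<and> 0 < slack_minus A)"
  by (auto simp: strict_bd_L_eig_def L_spec_bd_iff lam_plus_def lam_minus_def
      slack_plus_def slack_minus_def)

lemma L_spec_bd_line_subset:
  assumes "{lam_plus D, lam_minus D} = {\<mu>, \<nu>}"
  obtains p p' where "\<And>t. L_spec_bd (D + t *\<^sub>R Y) \<subseteq> {\<mu> + t * p, \<nu> + t * p'}"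
proof -
  have bd_line: "L_spec_bd (D + t *\<^sub>R Y) \<subseteq>
      {lam_plus D + t * lam_plus Y, lam_minus D + t * lam_minus Y}" for t
    by (auto simp: L_spec_bd_iff)
  from assms consider "\<mu> = lam_plus D" "\<nu> = lam_minus D" | "\<mu> = lam_minus D" "\<nu> = lam_plus D"
    by (auto simp: doubleton_eq_iff)
  then show thesis
  proof cases
    case 1
    then show thesis
      using bd_line by (intro that[of "lam_plus Y" "lam_minus Y"]) simp
  next
    case 2
    then show thesis
      using bd_line by (intro that[of "lam_minus Y" "lam_plus Y"]) (simp add: insert_commute)
  qed
qed

lemma det_nonzero_kernel:
  fixes M :: "real^'n^'n"
  assumes "det M \<noteq> 0" "M *v x = 0"
  shows "x = 0"
  using assms invertible_det_nz invertible_left_inverse matrix_left_invertible_ker by metis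

lemma L_spec_int_det:
  assumes "l \<in> L_spec_int X"
  shows "det (X - l *\<^sub>R mat 1) = 0"
proof -
  obtain r where "(X - l *\<^sub>R mat 1) *v vector [r, 1] = 0"
    using assms unfolding L_spec_int_iff by blast
  moreover have "vector [r, 1] \<noteq> (0::real^2)"
    by (simp add: vec_2_eq_iff)
  ultimately show ?thesis
    using det_nonzero_kernel by blast
qed

lemma L_strict_L_spec_bd: "L_strict X \<Longrightarrow> L_spec_bd X = {lam_plus X, lam_minus X}"
  by (auto simp: L_spec_bd_iff L_strict_def)

lemma L_strict_L_spec_int_nonempty:
  assumes "L_strict X"
  shows "L_spec_int X \<noteq> {}"
proof -
  \<comment> \<open>\<open>(r, 1)\<close> is an eigenvector, for the eigenvalue \<open>c r + d\<close>, exactly when \<open>q r = 0\<close>\<close>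
  define q where "q r = X$2$1 * r\<^sup>2 + (X$2$2 - X$1$1) * r - X$1$2" for r
  have q_ends: "q (-1) < 0" "0 < q 1"
    using assms by (simp_all add: q_def L_strict_def slack_plus_def slack_minus_def)
  moreover have "continuous_on {-1..1} q"
    unfolding q_def by (intro continuous_intros)
  ultimately obtain r where r: "-1 \<le> r" "r \<le> 1" "q r = 0"
    using IVT'[of q "-1" 0 1] by auto
  with q_ends have "\<bar>r\<bar> < 1"
    by (cases "r = 1 \<or> r = -1") auto
  moreover have "(X - (X$2$1 * r + X$2$2) *\<^sub>R mat 1) *v vector [r, 1] = 0"
    using r(3) by (simp add: q_def vec_2_eq_iff power2_eq_square algebra_simps)
  ultimately have "X$2$1 * r + X$2$2 \<in> L_spec_int X"
    unfolding L_spec_int_iff by blast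
  then show ?thesis
    by blast
qed

lemma L_strict_L_spec_int_unique:
  assumes "L_strict X" "l \<in> L_spec_int X" "l' \<in> L_spec_int X"
  shows "l = l'"
proof -
  obtain r s where rs: "\<bar>r\<bar> < 1" "\<bar>s\<bar> < 1"
    "(X - l *\<^sub>R mat 1) *v vector [r, 1] = 0" "(X - l' *\<^sub>R mat 1) *v vector [s, 1] = 0"
    using assms(2,3) unfolding L_spec_int_iff by blast
  define a b c d where "a = X$1$1" "b = X$1$2" "c = X$2$1" "d = X$2$2"
  have l: "l = c * r + d" "l' = c * s + d"
    using rs(3,4) by (simp_all add: vec_2_eq_iff a_b_c_d_def)
  have roots: "c * r\<^sup>2 + (d - a) * r - b = 0" "c * s\<^sup>2 + (d - a) * s - b = 0"
    using rs(3,4) by (simp_all add: vec_2_eq_iff a_b_c_d_def l power2_eq_square algebra_simps)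
  show "l = l'"
  proof (rule ccontr)
    assume "l \<noteq> l'"
    then have "r \<noteq> s"
      using l by auto
    moreover have "(r - s) * (c * (r + s) + (d - a)) = 0"
      using roots by (simp add: power2_eq_square algebra_simps)
    ultimately have da: "d - a = - c * (r + s)"
      by simp
    have "b = c * r\<^sup>2 + (d - a) * r"
      using roots(1) by simp
    also have "\<dots> = - c * r * s"
      unfolding da by (simp add: power2_eq_square algebra_simps)
    finally have b: "b = - c * r * s" .
    have "0 < c * ((1 - r) * (1 - s))" "0 < (- c) * ((1 + r) * (1 + s))"
      using assms(1) da b
      by (simp_all add: L_strict_def slack_plus_def slack_minus_def a_b_c_d_def algebra_simps)
    moreover have "0 < (1 - r) * (1 - s)" "0 < (1 + r) * (1 + s)"
      using rs(1,2) by (simp_all add: abs_less_iff)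
    ultimately have "0 < c" "0 < - c"
      using zero_less_mult_pos2 by blast+
    then show False
      by simp
  qed
qed

lemma L_strict_L_spec_int: "L_strict X \<Longrightarrow> \<exists>\<mu>. L_spec_int X = {\<mu>}"
  using L_strict_L_spec_int_nonempty L_strict_L_spec_int_unique by blast

lemma L_strict_frontier_kernel:
  assumes "L_strict X" "x \<in> frontier lorentz_cone" "(X - l *\<^sub>R mat 1) *v x = 0"
  shows "x = 0"
proof (rule ccontr)
  assume "x \<noteq> 0"
  then obtain v s where v: "v = vector [1, 1] \<or> v = vector [-1, 1]" "x = s *\<^sub>R v" "0 < s"
    using frontier_lorentz_cone_rays[OF assms(2)] by blast
  then have "s *\<^sub>R ((X - l *\<^sub>R mat 1) *v v) = 0"
    using assms(3) by (simp add: matrix_vector_mult_scaleR)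
  then have "(X - l *\<^sub>R mat 1) *v vector [1, 1] = 0 \<or> (X - l *\<^sub>R mat 1) *v vector [-1, 1] = 0"
    using v by auto
  then show False
    using assms(1)
    by (auto simp: vec_2_eq_iff L_strict_def slack_plus_def slack_minus_def)
qed

lemma L_spec_diag_0_1:
  "L_strict (mat2 0 0 0 1)" "lam_plus (mat2 0 0 0 1) = 1/2" "lam_minus (mat2 0 0 0 1) = 1/2"
  "L_spec (mat2 0 0 0 1) = {1/2, 1}"
proof -
  show strict: "L_strict (mat2 0 0 0 1)" and lam: "lam_plus (mat2 0 0 0 1) = 1/2"
    "lam_minus (mat2 0 0 0 1) = 1/2"
    by (simp_all add: L_strict_def slack_plus_def slack_minus_def lam_plus_def lam_minus_def)
  have "1 \<in> L_spec_int (mat2 0 0 0 1)"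
    unfolding L_spec_int_iff by (rule exI[of _ 0]) (simp add: vec_2_eq_iff)
  moreover obtain \<mu> where "L_spec_int (mat2 0 0 0 1) = {\<mu>}"
    using L_strict_L_spec_int strict by blast
  ultimately show "L_spec (mat2 0 0 0 1) = {1/2, 1}"
    by (simp add: L_spec_Un L_strict_L_spec_bd strict lam)
qed

section \<open>Perturbation along a line\<close>

lemma tendsto_affine_at_right: "((\<lambda>t. a + t * b) \<longlongrightarrow> a) (at_right (0::real))"
  by (auto intro!: tendsto_eq_intros)

lemma eventually_affine_in_finite:
  fixes c d :: real
  assumes "finite S" "eventually (\<lambda>t. c + t * d \<in> S) (at_right 0)"
  shows "d = 0"
proof -
  have "eventually (\<lambda>t. \<forall>s\<in>S - {c}. c + t * d \<noteq> s) (at_right 0)"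
    using assms(1) by (auto intro!: eventually_ball_finite tendsto_imp_eventually_ne[OF tendsto_affine_at_right])
  with assms(2) eventually_at_right_less[of 0]
  have "eventually (\<lambda>t. t * d = 0 \<and> 0 < t) (at_right (0::real))"
    by eventually_elim auto
  then obtain t :: real where "t * d = 0" "0 < t"
    using eventually_happens trivial_limit_at_right_real by blast
  then show "d = 0"
    by simp
qed

lemma affine_pair_not_eventually_covers:
  fixes \<mu> \<nu> b p p' :: real
  assumes "\<mu> \<noteq> \<nu>" "b \<noteq> 0"
  shows "\<not> (\<forall>\<^sub>F t in at_right 0. {\<mu>, \<mu> + t * b} \<subseteq> {\<mu> + t * p, \<nu> + t * p'})"
proof
  assume cover: "\<forall>\<^sub>F t in at_right 0. {\<mu>, \<mu> + t * b} \<subseteq> {\<mu> + t * p, \<nu> + t * p'}"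
  have "eventually (\<lambda>t. (\<nu> - \<mu>) + t * p' \<noteq> 0) (at_right 0)"
       "eventually (\<lambda>t. (\<nu> - \<mu>) + t * (p' - b) \<noteq> 0) (at_right 0)"
    using assms(1) by (auto intro: tendsto_imp_eventually_ne[OF tendsto_affine_at_right])
  moreover note cover eventually_at_right_less[of 0]
  ultimately have "eventually (\<lambda>t. False) (at_right (0::real))"
  proof eventually_elim
    case (elim t)
    then have "t * p = 0" "t * b = t * p"
      by (auto simp: algebra_simps)
    with elim(4) assms(2) show False
      by simp
  qed
  then show False
    by simp
qed

lemma eventually_affine_avoids:
  fixes a a' l b s s' :: real
  assumes "a = l \<Longrightarrow> s < 0 \<or> (s = 0 \<and> s' < 0)"
  shows "eventually (\<lambda>t. l + t * b \<noteq> a + t * a' \<or> s + t * s' < 0) (at_right 0)"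
proof (cases "a = l")
  case True
  then consider "s < 0" | "s = 0" "s' < 0"
    using assms by blast
  then have "eventually (\<lambda>t. s + t * s' < 0) (at_right 0)"
  proof cases
    case 1
    then show ?thesis
      using order_tendstoD(2)[OF tendsto_affine_at_right] by blast
  next
    case 2
    have "eventually (\<lambda>t. 0 < t) (at_right (0::real))"
      by (rule eventually_at_right_less)
    then show ?thesis
      by eventually_elim (simp add: 2 mult_pos_neg)
  qed
  then show ?thesis
    by eventually_elim simp
next
  case False
  then have "eventually (\<lambda>t. (a - l) + t * (a' - b) \<noteq> 0) (at_right 0)"
    using tendsto_imp_eventually_ne[OF tendsto_affine_at_right] by simp
  then show ?thesis
    by eventually_elim (auto simp: algebra_simps)
qed

lemma eventually_L_strict_line:
  assumes "L_strict A"
  shows "eventually (\<lambda>t. L_strict (A + t *\<^sub>R B)) (at_right 0)"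
proof -
  have "eventually (\<lambda>t. 0 < slack_plus A + t * slack_plus B) (at_right 0)"
       "eventually (\<lambda>t. 0 < slack_minus A + t * slack_minus B) (at_right 0)"
    using assms by (auto simp: L_strict_def intro: order_tendstoD(1)[OF tendsto_affine_at_right])
  then show ?thesis
    by eventually_elim (simp add: L_strict_def)
qed

lemma eventually_notin_L_spec_bd:
  assumes "lam_plus D = l \<Longrightarrow> slack_plus D < 0 \<or> (slack_plus D = 0 \<and> slack_plus Y < 0)"
    and "lam_minus D = l \<Longrightarrow> slack_minus D < 0 \<or> (slack_minus D = 0 \<and> slack_minus Y < 0)"
  shows "eventually (\<lambda>t. l + t * b \<notin> L_spec_bd (D + t *\<^sub>R Y)) (at_right 0)"
proof -
  have "eventually (\<lambda>t. l + t * b \<noteq> lam_plus D + t * lam_plus Y \<or>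
      slack_plus D + t * slack_plus Y < 0) (at_right 0)"
    by (rule eventually_affine_avoids) (use assms(1) in auto)
  moreover have "eventually (\<lambda>t. l + t * b \<noteq> lam_minus D + t * lam_minus Y \<or>
      slack_minus D + t * slack_minus Y < 0) (at_right 0)"
    by (rule eventually_affine_avoids) (use assms(2) in auto)
  ultimately show ?thesis
    by eventually_elim (auto simp: L_spec_bd_iff)
qed

definition mixed_det :: "real^2^2 \<Rightarrow> real^2^2 \<Rightarrow> real" where
  "mixed_det M N = M$1$1 * N$2$2 + N$1$1 * M$2$2 - M$1$2 * N$2$1 - N$1$2 * M$2$1"

lemma det_add_scaleR_2:
  "det (M + t *\<^sub>R N) = det M + t * mixed_det M N + t\<^sup>2 * det (N::real^2^2)"
  by (simp add: det_2 mixed_det_def power2_eq_square algebra_simps)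

lemma pencil_shift:
  "D + t *\<^sub>R Y - (l + t * b) *\<^sub>R mat 1 = (D - l *\<^sub>R mat 1) + t *\<^sub>R (Y - b *\<^sub>R mat 1)"
  by (simp add: algebra_simps)

lemma singular_kernel_row:
  fixes M :: "real^2^2"
  assumes "det M = 0" and kernel: "\<And>x. x \<in> lorentz_cone \<Longrightarrow> M *v x = 0 \<Longrightarrow> x = 0"
  obtains i where "\<bar>M$i$1\<bar> < \<bar>M$i$2\<bar>"
proof -
  have "vector [0, 1] \<in> lorentz_cone" "vector [0, 1] \<noteq> (0::real^2)"
    by (simp_all add: lorentz_cone_def vec_2_eq_iff)
  then have "M \<noteq> 0"
    using kernel by fastforce
  then obtain i where i: "M$i$1 \<noteq> 0 \<or> M$i$2 \<noteq> 0"
    by (auto simp: vec_eq_iff forall_2)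
  define w :: "real^2" where "w = vector [M$i$2, - M$i$1]"
  have "M *v w = 0" "M *v (- w) = 0"
    using assms(1) exhaust_2[of i] by (auto simp: w_def vec_2_eq_iff det_2 algebra_simps)
  moreover have "w \<noteq> 0"
    using i by (auto simp: w_def vec_2_eq_iff)
  ultimately have "w \<notin> lorentz_cone" "- w \<notin> lorentz_cone"
    using kernel by force+
  then show thesis
    by (intro that[of i]) (auto simp: w_def lorentz_cone_def)
qed

lemma eventually_cone_kernel_trivial:
  fixes M N :: "real^2^2"
  assumes kernel: "\<And>x. x \<in> lorentz_cone \<Longrightarrow> M *v x = 0 \<Longrightarrow> x = 0"
  shows "eventually (\<lambda>t. \<forall>x\<in>lorentz_cone. (M + t *\<^sub>R N) *v x = 0 \<longrightarrow> x = 0) (at_right 0)"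
proof (cases "det M = 0")
  case False
  have "((\<lambda>t. det (M + t *\<^sub>R N)) \<longlongrightarrow> det M) (at_right 0)"
    unfolding det_add_scaleR_2 by (auto intro!: tendsto_eq_intros)
  then have "eventually (\<lambda>t. det (M + t *\<^sub>R N) \<noteq> 0) (at_right 0)"
    using False tendsto_imp_eventually_ne by blast
  then show ?thesis
    by eventually_elim (use det_nonzero_kernel in blast)
next
  case True
  then obtain i where "\<bar>M$i$1\<bar> < \<bar>M$i$2\<bar>"
    using singular_kernel_row kernel by blast
  moreover have "((\<lambda>t. \<bar>M$i$2 + t * N$i$2\<bar> - \<bar>M$i$1 + t * N$i$1\<bar>)
      \<longlongrightarrow> \<bar>M$i$2\<bar> - \<bar>M$i$1\<bar>) (at_right 0)"
    by (auto intro!: tendsto_eq_intros)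
  ultimately have "eventually (\<lambda>t. \<bar>M$i$1 + t * N$i$1\<bar> < \<bar>M$i$2 + t * N$i$2\<bar>) (at_right 0)"
    using order_tendstoD(1)[of _ "\<bar>M$i$2\<bar> - \<bar>M$i$1\<bar>" _ 0] by fastforce
  then show ?thesis
  proof eventually_elim
    case (elim t)
    show ?case
    proof (intro ballI impI)
      fix x :: "real^2"
      assume x: "x \<in> lorentz_cone" "(M + t *\<^sub>R N) *v x = 0"
      then have "((M + t *\<^sub>R N) *v x)$i = 0"
        by simp
      then have "(M$i$1 + t * N$i$1) * x$1 + (M$i$2 + t * N$i$2) * x$2 = 0"
        by simp
      then show "x = 0"
        by (rule lorentz_cone_row_kernel[OF elim x(1)])
    qed
  qed
qed

lemma eventually_notin_L_spec_int:
  assumes "L_strict D" "l \<notin> L_spec_int D"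
  shows "eventually (\<lambda>t. l + t * b \<notin> L_spec_int (D + t *\<^sub>R Y)) (at_right 0)"
proof -
  have "x = 0" if "x \<in> lorentz_cone" "(D - l *\<^sub>R mat 1) *v x = 0" for x
  proof (cases "x \<in> interior lorentz_cone")
    case True
    then have "l \<in> L_spec_int D"
      using that(2) L_eig_vec_interior unfolding L_spec_int_def by blast
    with assms(2) show ?thesis
      by blast
  next
    case False
    then show ?thesis
      using that lorentz_cone_interior_frontier L_strict_frontier_kernel[OF assms(1)] by blast
  qed
  then have "eventually (\<lambda>t. \<forall>x\<in>lorentz_cone.
      ((D - l *\<^sub>R mat 1) + t *\<^sub>R (Y - b *\<^sub>R mat 1)) *v x = 0 \<longrightarrow> x = 0) (at_right 0)"
    by (rule eventually_cone_kernel_trivial)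
  then show ?thesis
  proof eventually_elim
    case (elim t)
    have "vector [r, 1] \<in> lorentz_cone" "vector [r, 1] \<noteq> (0::real^2)" if "\<bar>r\<bar> < 1" for r
      using that by (simp_all add: lorentz_cone_def vec_2_eq_iff)
    with elim show ?case
      unfolding L_spec_int_iff pencil_shift by blast
  qed
qed

lemma poly_eventually_zero:
  assumes "eventually (\<lambda>t. poly p t = 0) (at_right (a::real))"
  shows "p = 0"
proof (rule ccontr)
  assume "p \<noteq> 0"
  obtain e where "a < e" "\<And>t. a < t \<Longrightarrow> t < e \<Longrightarrow> poly p t = 0"
    using assms unfolding eventually_at_right_field by blast
  then have "{a<..<e} \<subseteq> {t. poly p t = 0}"
    by auto
  with poly_roots_finite[OF \<open>p \<noteq> 0\<close>] have "finite {a<..<e}"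
    by (rule finite_subset[rotated])
  with \<open>a < e\<close> show False
    using infinite_Ioo by blast
qed

lemma eventually_L_spec_int_pencil:
  assumes "eventually (\<lambda>t. l + t * b \<in> L_spec_int (D + t *\<^sub>R Y)) (at_right 0)"
  shows "det (D - l *\<^sub>R mat 1) = 0" "mixed_det (D - l *\<^sub>R mat 1) (Y - b *\<^sub>R mat 1) = 0"
    "det (Y - b *\<^sub>R mat 1) = 0"
proof -
  let ?p = "[:det (D - l *\<^sub>R mat 1), mixed_det (D - l *\<^sub>R mat 1) (Y - b *\<^sub>R mat 1),
      det (Y - b *\<^sub>R mat 1):]"
  from assms have "eventually (\<lambda>t. poly ?p t = 0) (at_right 0)"
  proof eventually_elim
    case (elim t)
    have "poly ?p t = det ((D - l *\<^sub>R mat 1) + t *\<^sub>R (Y - b *\<^sub>R mat 1))"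
      unfolding det_add_scaleR_2 by (simp add: power2_eq_square algebra_simps)
    also have "\<dots> = 0"
      using L_spec_int_det[OF elim] unfolding pencil_shift .
    finally show ?case .
  qed
  then have "?p = 0"
    by (rule poly_eventually_zero)
  then show "det (D - l *\<^sub>R mat 1) = 0" "mixed_det (D - l *\<^sub>R mat 1) (Y - b *\<^sub>R mat 1) = 0"
    "det (Y - b *\<^sub>R mat 1) = 0"
    by simp_all
qed

lemma det_rotation_shift: "det (mat2 0 s (- s) 0 - b *\<^sub>R mat 1) = b\<^sup>2 + s\<^sup>2"
  by (simp add: det_2 power2_eq_square)

lemma symmetric_pencil_swap_kernel:
  assumes sym: "M$1$2 = M$2$1" and "det M = 0"
    and "mixed_det M (mat2 0 1 1 0 - b *\<^sub>R mat 1) = 0" "det (mat2 0 1 1 0 - b *\<^sub>R mat 1) = 0"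
  shows "\<bar>b\<bar> = 1" "M *v vector [b, 1] = 0"
proof -
  define p q r where "p = M$1$1" "q = M$1$2" "r = M$2$2"
  have b: "b\<^sup>2 = 1"
    using assms(4) by (simp add: det_2 power2_eq_square)
  then show "\<bar>b\<bar> = 1"
    by (auto simp: power2_eq_1_iff)
  have tr: "b * (p + r) = - 2 * q" and pq: "p * r = q\<^sup>2"
    using assms(2,3) sym by (simp_all add: mixed_det_def det_2 p_q_r_def power2_eq_square algebra_simps)
  have "(p - r)\<^sup>2 = 0"
    using b tr pq by algebra
  then have "p = r"
    by simp
  then have bp: "b * p = - q"
    using tr by simp
  moreover from bp have "q * b + r = 0"
    using b \<open>p = r\<close> by algebra
  ultimately show "M *v vector [b, 1] = 0"
    using sym by (simp add: vec_2_eq_iff p_q_r_def algebra_simps)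
qed

lemma symmetric_pencil_diag_zero:
  assumes "M$1$2 = M$2$1" "M$1$1 = M$2$2" "det M = 0"
    and "mixed_det M (mat2 1 0 0 (-1) - b *\<^sub>R mat 1) = 0" "det (mat2 1 0 0 (-1) - b *\<^sub>R mat 1) = 0"
  shows "M = 0"
proof -
  have "b \<noteq> 0"
    using assms(5) by (auto simp: det_2)
  then have "M$1$1 = 0"
    using assms(2,4) by (simp add: mixed_det_def algebra_simps)
  then have "M$1$2 = 0"
    using assms(1-3) by (simp add: det_2)
  with \<open>M$1$1 = 0\<close> show "M = 0"
    using assms(1,2) by (simp add: vec_eq_iff forall_2)
qed

section \<open>Linear L-spectrum preservers\<close>

lemma linear_inj_on_imp_surj_on_subspace:
  fixes f :: "'a::euclidean_space \<Rightarrow> 'a"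
  assumes "linear f" "subspace S" "f ` S \<subseteq> S" "inj_on f S"
  shows "f ` S = S"
proof (rule subspace_dim_equal)
  show "subspace (f ` S)"
    using assms(1,2) by (rule linear_subspace_image)
  have "span S = S"
    using assms(2) by (simp add: span_eq_iff)
  then have "inj_on f (span S)"
    using assms(4) by (simp only:)
  then have "dim (f ` S) = dim S"
    using assms(1) by (rule dim_image_eq[rotated])
  then show "dim S \<le> dim (f ` S)"
    by simp
qed (use assms in auto)

lemma linear_retraction_onto:
  assumes "W = UNIV \<or> W = sym_mats"
  obtains P :: "real^2^2 \<Rightarrow> real^2^2" where "linear P" "\<And>X. P X \<in> W" "\<And>X. X \<in> W \<Longrightarrow> P X = X"
  using assms
proof
  assume "W = UNIV"
  then show thesis
    using that[of id] linear_id by simp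
next
  assume W: "W = sym_mats"
  show thesis
  proof (rule that)
    show "linear (\<lambda>X::real^2^2. (1/2) *\<^sub>R (X + transpose X))"
      by (rule linearI) (simp_all add: transpose_def vec_eq_iff algebra_simps)
    show "(1/2) *\<^sub>R (X + transpose X) \<in> W" for X :: "real^2^2"
      using W by (simp add: sym_mats_iff transpose_def)
    show "(1/2) *\<^sub>R (X + transpose X) = X" if "X \<in> W" for X :: "real^2^2"
      using that W by (simp add: sym_mats_def)
  qed
qed

locale L_spec_preserver =
  fixes W :: "(real^2^2) set" and \<phi> :: "real^2^2 \<Rightarrow> real^2^2"
  assumes space: "W = UNIV \<or> W = sym_mats"
    and maps_into: "\<forall>B\<in>W. \<phi> B \<in> W"
    and additive: "\<forall>B\<in>W. \<forall>C\<in>W. \<phi> (B + C) = \<phi> B + \<phi> C"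
    and homogeneous: "\<forall>r. \<forall>B\<in>W. \<phi> (r *\<^sub>R B) = r *\<^sub>R \<phi> B"
    and preserves_L_spec: "\<forall>B\<in>W. L_spec (\<phi> B) = L_spec B"
begin

lemma subspace_W: "subspace W"
  using space subspace_UNIV subspace_sym_mats by blast

lemma symmetric_in_W: "X$1$2 = X$2$1 \<Longrightarrow> X \<in> W"
  using space by (auto simp: sym_mats_iff)

lemma L_spec_line:
  assumes "B \<in> W" "C \<in> W"
  shows "L_spec (\<phi> B + t *\<^sub>R \<phi> C) = L_spec (B + t *\<^sub>R C)"
proof -
  have "t *\<^sub>R C \<in> W" "B + t *\<^sub>R C \<in> W"
    using assms subspace_W by (simp_all add: subspace_scale subspace_add)
  then show ?thesis
    using assms additive homogeneous preserves_L_spec by metis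
qed

lemma kernel_trivial:
  assumes "B \<in> W" "\<phi> B = 0"
  shows "B = 0"
proof -
  \<comment> \<open>Along \<open>C + t B\<close> the L-spectrum stays \<open>{1/2, 1}\<close>: the boundary values \<open>1/2 + t lam(B)\<close>
    cannot move, and \<open>1\<close> must remain an interior L-eigenvalue for every \<open>t\<close>.\<close>
  let ?C = "mat2 0 0 0 1"
  have "?C \<in> W"
    by (rule symmetric_in_W) simp
  then have L_spec_C_line: "L_spec (?C + t *\<^sub>R B) = {1/2, 1}" for t
    using L_spec_line[OF _ assms(1), of ?C t] assms(2) preserves_L_spec L_spec_diag_0_1(4) by simp
  have strict_line: "eventually (\<lambda>t. L_strict (?C + t *\<^sub>R B)) (at_right 0)"
    using eventually_L_strict_line L_spec_diag_0_1(1) by blast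
  have "eventually (\<lambda>t. {1/2 + t * lam_plus B, 1/2 + t * lam_minus B} \<subseteq> {1/2, 1}) (at_right 0)"
    using strict_line
  proof eventually_elim
    case (elim t)
    have "L_spec_bd (?C + t *\<^sub>R B) \<subseteq> L_spec (?C + t *\<^sub>R B)"
      by (simp add: L_spec_Un)
    with elim show ?case
      unfolding L_spec_C_line by (simp add: L_strict_L_spec_bd L_spec_diag_0_1)
  qed
  then have "eventually (\<lambda>t. 1/2 + t * lam_plus B \<in> {1/2, 1}) (at_right 0)"
    "eventually (\<lambda>t. 1/2 + t * lam_minus B \<in> {1/2, 1}) (at_right 0)"
    by (auto elim: eventually_mono)
  then have "lam_plus B = 0" "lam_minus B = 0"
    by (metis eventually_affine_in_finite finite.emptyI finite.insertI)+
  then have B: "B$2$2 = - B$1$1" "B$2$1 = - B$1$2"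
    by (simp_all add: lam_plus_def lam_minus_def)
  have "det (?C + t *\<^sub>R B - mat 1) = 0" for t
  proof -
    have "1 \<notin> L_spec_bd (?C + t *\<^sub>R B)"
      using \<open>lam_plus B = 0\<close> \<open>lam_minus B = 0\<close> by (simp add: L_spec_bd_iff L_spec_diag_0_1)
    then have "1 \<in> L_spec_int (?C + t *\<^sub>R B)"
      using L_spec_C_line[of t] by (auto simp: L_spec_Un)
    from L_spec_int_det[OF this] show ?thesis
      by simp
  qed
  from this[of 1] this[of "-1"] have "B$1$1 = 0" "B$1$2 = 0"
    using B by (simp_all add: det_2 algebra_simps)
  with B show "B = 0"
    by (simp add: vec_eq_iff forall_2)
qed

lemma inj_on_W: "inj_on \<phi> W"
proof (rule inj_onI)
  fix B C
  assume BC: "B \<in> W" "C \<in> W" "\<phi> B = \<phi> C"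
  then have "- C \<in> W" "B - C \<in> W"
    using subspace_W by (simp_all add: subspace_neg subspace_diff)
  have "\<phi> (- C) = - \<phi> C"
    using homogeneous BC(2) by (metis scaleR_minus1_left)
  then have "\<phi> (B - C) = 0"
    using additive BC \<open>- C \<in> W\<close> by (metis diff_conv_add_uminus diff_self)
  with \<open>B - C \<in> W\<close> have "B - C = 0"
    by (rule kernel_trivial)
  then show "B = C"
    by simp
qed

lemma image_W: "\<phi> ` W = W"
proof -
  obtain P where P: "linear P" "\<And>X. P X \<in> W" "\<And>X. X \<in> W \<Longrightarrow> P X = X"
    using linear_retraction_onto space by blast
  have "linear (\<phi> \<circ> P)"
    by (rule linearI) (use P additive homogeneous in \<open>simp_all add: linear_add linear_scale\<close>)
  moreover have "(\<phi> \<circ> P) ` W = \<phi> ` W"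
    using P(3) by (simp add: image_comp[symmetric])
  moreover have "inj_on (\<phi> \<circ> P) W"
    using P(3) inj_on_W by (simp add: inj_on_def)
  moreover have "\<phi> ` W \<subseteq> W"
    using maps_into by blast
  ultimately show ?thesis
    using linear_inj_on_imp_surj_on_subspace[OF _ subspace_W] by metis
qed

lemma pencil_through_L_spec_bd:
  assumes "A \<in> W" "L_strict A" "l \<in> L_spec_bd A" "Y \<in> W"
    and avoid: "\<And>b. eventually (\<lambda>t. l + t * b \<notin> L_spec_bd (\<phi> A + t *\<^sub>R Y)) (at_right 0)"
  obtains b where "det (\<phi> A - l *\<^sub>R mat 1) = 0"
    "mixed_det (\<phi> A - l *\<^sub>R mat 1) (Y - b *\<^sub>R mat 1) = 0" "det (Y - b *\<^sub>R mat 1) = 0"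
proof -
  have "Y \<in> \<phi> ` W"
    using image_W assms(4) by simp
  then obtain B where B: "B \<in> W" "\<phi> B = Y"
    by blast
  have l: "l = lam_plus A \<or> l = lam_minus A"
    using assms(2,3) by (simp add: L_strict_L_spec_bd)
  define b where "b = (if l = lam_plus A then lam_plus B else lam_minus B)"
  have "eventually (\<lambda>t. l + t * b \<in> L_spec_int (\<phi> A + t *\<^sub>R Y)) (at_right 0)"
    using eventually_L_strict_line[OF assms(2), of B] avoid[of b]
  proof eventually_elim
    case (elim t)
    then have "l + t * b \<in> L_spec_bd (A + t *\<^sub>R B)"
      using l by (auto simp: L_strict_L_spec_bd b_def)
    then have "l + t * b \<in> L_spec (\<phi> A + t *\<^sub>R Y)"
      using L_spec_line[OF assms(1) B(1)] B(2) by (simp add: L_spec_Un)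
    with elim(2) show ?case
      by (simp add: L_spec_Un)
  qed
  from eventually_L_spec_int_pencil[OF this] show thesis
    by (rule that)
qed

lemma rotation_pencil_impossible:
  assumes "W = UNIV" "A \<in> W" "L_strict A" "l \<in> L_spec_bd A" "s \<noteq> 0"
    and "\<And>b. eventually (\<lambda>t. l + t * b \<notin> L_spec_bd (\<phi> A + t *\<^sub>R mat2 0 s (- s) 0)) (at_right 0)"
  shows False
proof -
  have "mat2 0 s (- s) 0 \<in> W"
    using assms(1) by simp
  then obtain b where "det (mat2 0 s (- s) 0 - b *\<^sub>R mat 1) = 0"
    using pencil_through_L_spec_bd[OF assms(2-4) _ assms(6)] by blast
  with \<open>s \<noteq> 0\<close> show False
    by (simp add: det_rotation_shift sum_power2_eq_zero_iff)
qed

lemma L_spec_bd_subset: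
  assumes "A \<in> W" "L_strict A"
  shows "L_spec_bd A \<subseteq> L_spec_bd (\<phi> A)"
proof
  fix l
  assume l: "l \<in> L_spec_bd A"
  show "l \<in> L_spec_bd (\<phi> A)"
  proof (rule ccontr)
    assume notin: "l \<notin> L_spec_bd (\<phi> A)"
    have avoid: "eventually (\<lambda>t. l + t * b \<notin> L_spec_bd (\<phi> A + t *\<^sub>R Y)) (at_right 0)" for Y b
      by (rule eventually_notin_L_spec_bd) (use notin in \<open>auto simp: L_spec_bd_iff\<close>)
    from space show False
    proof
      assume "W = UNIV"
      then show False
        using rotation_pencil_impossible[OF _ assms l, of 1] avoid by simp
    next
      assume sym: "W = sym_mats"
      have "mat2 0 1 1 0 \<in> W"
        by (rule symmetric_in_W) simp
      then obtain b where pencil: "det (\<phi> A - l *\<^sub>R mat 1) = 0"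
        "mixed_det (\<phi> A - l *\<^sub>R mat 1) (mat2 0 1 1 0 - b *\<^sub>R mat 1) = 0"
        "det (mat2 0 1 1 0 - b *\<^sub>R mat 1) = 0"
        using pencil_through_L_spec_bd[OF assms l _ avoid] by blast
      have "\<phi> A \<in> sym_mats"
        using maps_into assms(1) sym by blast
      then have "(\<phi> A - l *\<^sub>R mat 1)$1$2 = (\<phi> A - l *\<^sub>R mat 1)$2$1"
        by (simp add: sym_mats_iff)
      from symmetric_pencil_swap_kernel[OF this pencil] have "l \<in> L_spec_bd (\<phi> A)"
        by (intro frontier_kernel_L_spec_bd[of "vector [b, 1]"]) (simp_all add: frontier_lorentz_cone vec_2_eq_iff)
      with notin show False
        by blast
    qed
  qed
qed

lemma slack_nonzero_UNIV:
  assumes "W = UNIV" "A \<in> W" "L_strict A" "lam_plus (\<phi> A) \<noteq> lam_minus (\<phi> A)"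
    and "lam_plus (\<phi> A) \<in> L_spec_bd A" "lam_minus (\<phi> A) \<in> L_spec_bd A"
  shows "slack_plus (\<phi> A) \<noteq> 0 \<and> slack_minus (\<phi> A) \<noteq> 0"
proof -
  have False if "l \<in> L_spec_bd A" and l: "l = lam_plus (\<phi> A) \<and> slack_plus (\<phi> A) = 0 \<and> 0 < s \<or>
      l = lam_minus (\<phi> A) \<and> slack_minus (\<phi> A) = 0 \<and> s < 0" for l and s :: real
  proof (rule rotation_pencil_impossible[OF assms(1-3) that(1)])
    show "s \<noteq> 0"
      using l by auto
    show "eventually (\<lambda>t. l + t * b \<notin> L_spec_bd (\<phi> A + t *\<^sub>R mat2 0 s (- s) 0)) (at_right 0)" for b
      by (rule eventually_notin_L_spec_bd) (use l assms(4) in \<open>auto simp: slack_plus_def slack_minus_def\<close>)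
  qed
  from this[OF assms(5), of 1] this[OF assms(6), of "-1"] show ?thesis
    by auto
qed

lemma slack_nonzero_sym_mats:
  assumes "W = sym_mats" "A \<in> W" "L_strict A" "lam_plus (\<phi> A) \<noteq> lam_minus (\<phi> A)"
    and "lam_plus (\<phi> A) \<in> L_spec_bd A"
  shows "slack_plus (\<phi> A) \<noteq> 0 \<and> slack_minus (\<phi> A) \<noteq> 0"
proof -
  let ?F = "mat2 1 0 0 (-1)"
  have sym_A: "\<phi> A$1$2 = \<phi> A$2$1"
    using maps_into assms(1,2) by (auto simp: sym_mats_iff)
  then have slack_eq: "slack_minus (\<phi> A) = slack_plus (\<phi> A)"
    by (simp add: slack_plus_def slack_minus_def)
  have "?F \<in> W"
    by (rule symmetric_in_W) simp
  have "slack_plus (\<phi> A) \<noteq> 0"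
  proof
    assume zero: "slack_plus (\<phi> A) = 0"
    then have "eventually (\<lambda>t. lam_plus (\<phi> A) + t * b \<notin> L_spec_bd (\<phi> A + t *\<^sub>R ?F)) (at_right 0)"
      for b using slack_eq by (intro eventually_notin_L_spec_bd) (simp_all add: slack_plus_def slack_minus_def)
    then obtain b where "det (\<phi> A - lam_plus (\<phi> A) *\<^sub>R mat 1) = 0"
      "mixed_det (\<phi> A - lam_plus (\<phi> A) *\<^sub>R mat 1) (?F - b *\<^sub>R mat 1) = 0" "det (?F - b *\<^sub>R mat 1) = 0"
      using pencil_through_L_spec_bd[OF assms(2,3,5) \<open>?F \<in> W\<close>] by blast
    then have "\<phi> A - lam_plus (\<phi> A) *\<^sub>R mat 1 = 0"
      using zero sym_A by (intro symmetric_pencil_diag_zero) (simp_all add: slack_plus_def)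
    then have "lam_minus (\<phi> A) = lam_plus (\<phi> A)"
      by (simp add: vec_eq_iff forall_2 lam_minus_def)
    with assms(4) show False
      by simp
  qed
  with slack_eq show ?thesis
    by simp
qed

lemma L_strict_preserved:
  assumes A: "A \<in> W" "L_strict A" "lam_plus A \<noteq> lam_minus A"
  shows "L_strict (\<phi> A) \<and> L_spec_bd (\<phi> A) = L_spec_bd A"
proof -
  have "lam_plus A \<in> L_spec_bd (\<phi> A)" "lam_minus A \<in> L_spec_bd (\<phi> A)"
    using L_spec_bd_subset[OF A(1,2)] L_strict_L_spec_bd[OF A(2)] by auto
  then have match: "{lam_plus (\<phi> A), lam_minus (\<phi> A)} = {lam_plus A, lam_minus A}"
    and nonneg: "0 \<le> slack_plus (\<phi> A)" "0 \<le> slack_minus (\<phi> A)"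
    using A(3) unfolding L_spec_bd_iff by auto
  then have bd: "L_spec_bd (\<phi> A) = L_spec_bd A" and ne: "lam_plus (\<phi> A) \<noteq> lam_minus (\<phi> A)"
    using A(3) by (auto simp: L_spec_bd_iff L_strict_L_spec_bd[OF A(2)] doubleton_eq_iff)
  have "lam_plus (\<phi> A) \<in> {lam_plus A, lam_minus A}" "lam_minus (\<phi> A) \<in> {lam_plus A, lam_minus A}"
    unfolding match[symmetric] by simp_all
  then have A_bd: "lam_plus (\<phi> A) \<in> L_spec_bd A" "lam_minus (\<phi> A) \<in> L_spec_bd A"
    unfolding L_strict_L_spec_bd[OF A(2)] .
  from space have "slack_plus (\<phi> A) \<noteq> 0 \<and> slack_minus (\<phi> A) \<noteq> 0"
  proof
    assume "W = UNIV"
    from slack_nonzero_UNIV[OF this A(1,2) ne A_bd] show ?thesis .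
  next
    assume "W = sym_mats"
    from slack_nonzero_sym_mats[OF this A(1,2) ne A_bd(1)] show ?thesis .
  qed
  with nonneg bd show ?thesis
    by (simp add: L_strict_def)
qed

lemma interior_eig_stays_while_bd_eig_moves:
  assumes A: "A \<in> W" "L_strict A" "\<mu> \<in> L_spec_int A" "\<mu> \<in> L_spec_bd A"
    and D: "L_strict (\<phi> A)" "\<mu> \<notin> L_spec_int (\<phi> A)"
  obtains B b where "B \<in> W" "b \<noteq> 0"
    "\<forall>\<^sub>F t in at_right 0. {\<mu>, \<mu> + t * b} \<subseteq> L_spec_bd (\<phi> A + t *\<^sub>R \<phi> B)"
proof -
  obtain r where r: "\<bar>r\<bar> < 1" "(A - \<mu> *\<^sub>R mat 1) *v vector [r, 1] = 0"
    using A(3) unfolding L_spec_int_iff by blast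
  define B where "B = mat2 1 (- r) (- r) (r\<^sup>2)"
  have "B \<in> W"
    by (rule symmetric_in_W) (simp add: B_def)
  have B_ker: "B *v vector [r, 1] = 0"
    by (simp add: B_def vec_2_eq_iff power2_eq_square)
  define b where "b = (if \<mu> = lam_plus A then lam_plus B else lam_minus B)"
  have "lam_plus B = (1 - r)\<^sup>2 / 2" "lam_minus B = (1 + r)\<^sup>2 / 2"
    by (simp_all add: B_def lam_plus_def lam_minus_def power2_eq_square algebra_simps)
  then have "b \<noteq> 0"
    using r(1) by (auto simp: b_def)
  have "\<forall>\<^sub>F t in at_right 0. {\<mu>, \<mu> + t * b} \<subseteq> L_spec_bd (\<phi> A + t *\<^sub>R \<phi> B)"
    using eventually_L_strict_line[OF A(2), of B]
      eventually_notin_L_spec_int[OF D, of 0 "\<phi> B"] eventually_notin_L_spec_int[OF D, of b "\<phi> B"]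
  proof eventually_elim
    case (elim t)
    have "(A + t *\<^sub>R B - \<mu> *\<^sub>R mat 1) *v vector [r, 1] =
        (A - \<mu> *\<^sub>R mat 1) *v vector [r, 1] + t *\<^sub>R (B *v vector [r, 1])"
      by (simp add: vec_2_eq_iff algebra_simps)
    then have "(A + t *\<^sub>R B - \<mu> *\<^sub>R mat 1) *v vector [r, 1] = 0"
      using r(2) B_ker by simp
    then have "\<mu> \<in> L_spec (A + t *\<^sub>R B)"
      using r(1) by (auto simp: L_spec_Un L_spec_int_iff)
    moreover have "\<mu> + t * b \<in> L_spec (A + t *\<^sub>R B)"
      using elim(1) A(2,4) by (auto simp: L_spec_Un L_strict_L_spec_bd b_def)
    ultimately show ?case
      using elim(2,3) L_spec_line[OF A(1) \<open>B \<in> W\<close>] by (auto simp: L_spec_Un)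
  qed
  with \<open>B \<in> W\<close> \<open>b \<noteq> 0\<close> show thesis
    by (rule that)
qed

lemma L_spec_int_preserved:
  assumes A: "A \<in> W" "L_strict A" and D: "L_strict (\<phi> A)" "L_spec_bd (\<phi> A) = L_spec_bd A"
  shows "L_spec_int (\<phi> A) = L_spec_int A"
proof -
  obtain \<mu> \<nu> where \<mu>: "L_spec_int A = {\<mu>}" and \<nu>: "L_spec_int (\<phi> A) = {\<nu>}"
    using L_strict_L_spec_int A(2) D(1) by metis
  have "\<nu> = \<mu>"
  proof (rule ccontr)
    assume "\<nu> \<noteq> \<mu>"
    have "L_spec (\<phi> A) = L_spec A"
      using preserves_L_spec A(1) by blast
    then have "{\<nu>} \<union> L_spec_bd A = {\<mu>} \<union> L_spec_bd A"
      unfolding L_spec_Un \<mu> \<nu> D(2) .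
    then have "\<mu> \<in> L_spec_bd A" "\<nu> \<in> L_spec_bd A"
      using \<open>\<nu> \<noteq> \<mu>\<close> by (metis UnCI UnE singletonD singletonI)+
    then have "\<mu> \<in> {lam_plus (\<phi> A), lam_minus (\<phi> A)}" "\<nu> \<in> {lam_plus (\<phi> A), lam_minus (\<phi> A)}"
      using D by (simp_all add: L_strict_L_spec_bd)
    then have bd_D: "{lam_plus (\<phi> A), lam_minus (\<phi> A)} = {\<mu>, \<nu>}"
      using \<open>\<nu> \<noteq> \<mu>\<close> by auto
    have "\<mu> \<in> L_spec_int A" "\<mu> \<notin> L_spec_int (\<phi> A)"
      using \<mu> \<nu> \<open>\<nu> \<noteq> \<mu>\<close> by simp_all
    then obtain B b where "B \<in> W" "b \<noteq> 0"
      and moving: "\<forall>\<^sub>F t in at_right 0. {\<mu>, \<mu> + t * b} \<subseteq> L_spec_bd (\<phi> A + t *\<^sub>R \<phi> B)"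
      using interior_eig_stays_while_bd_eig_moves[OF A] \<open>\<mu> \<in> L_spec_bd A\<close> D(1) by blast
    obtain p p' where pp: "\<And>t. L_spec_bd (\<phi> A + t *\<^sub>R \<phi> B) \<subseteq> {\<mu> + t * p, \<nu> + t * p'}"
      using L_spec_bd_line_subset[OF bd_D] by blast
    from moving have "\<forall>\<^sub>F t in at_right 0. {\<mu>, \<mu> + t * b} \<subseteq> {\<mu> + t * p, \<nu> + t * p'}"
    proof eventually_elim
      case (elim t)
      from elim pp[of t] show ?case
        by (rule subset_trans)
    qed
    with affine_pair_not_eventually_covers[OF \<open>\<nu> \<noteq> \<mu>\<close>[symmetric] \<open>b \<noteq> 0\<close>] show False
      by blast
  qed
  then show ?thesis
    using \<mu> \<nu> by simp
qed

end

theorem lemma4p1: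
  fixes W :: "(real^2^2) set" and \<phi> :: "real^2^2 \<Rightarrow> real^2^2" and A :: "real^2^2"
  assumes "W = UNIV \<or> W = sym_mats"
    and "\<forall>B\<in>W. \<phi> B \<in> W"
    and "\<forall>B\<in>W. \<forall>C\<in>W. \<phi> (B + C) = \<phi> B + \<phi> C"
    and "\<forall>r. \<forall>B\<in>W. \<phi> (r *\<^sub>R B) = r *\<^sub>R \<phi> B"
    and "\<forall>B\<in>W. L_spec (\<phi> B) = L_spec B"
    and "A \<in> W"
    and "\<exists>lam1 lam2. lam1 \<noteq> lam2 \<and> strict_bd_L_eig A lam1 \<and> strict_bd_L_eig A lam2"
  shows "L_spec_int A = L_spec_int (\<phi> A) \<and> L_spec_int A \<noteq> {} \<and>
         L_spec_bd A = L_spec_bd (\<phi> A)"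
proof -
  interpret L_spec_preserver W \<phi>
    using assms(1-5) by (rule L_spec_preserver.intro)
  have A: "L_strict A" "lam_plus A \<noteq> lam_minus A"
    using assms(7) by (auto simp: strict_bd_L_eig_iff L_strict_def)
  then have D: "L_strict (\<phi> A)" "L_spec_bd (\<phi> A) = L_spec_bd A"
    using L_strict_preserved[OF assms(6)] by auto
  show ?thesis
    using L_spec_int_preserved[OF assms(6) A(1) D] L_strict_L_spec_int_nonempty[OF A(1)] D(2)
    by simp
qed

end
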